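(* Let $k$ be a finite field of odd characteristic, $A$ a finite $k$-algebra with involution $*$ fixing $k$ pointwise, $(S,\eta)$ a self-dual $A$-module, $W=S\oplus S$ with symplectic form $B$ and $\chi=\psi\circ B$, and let $\mathcal L$, $\mathcal E_L$ be as in the context. For $L,L'\in\mathcal L$ define $\gamma_{L',L}$ on $\mathcal E_L$ by $$(\gamma_{L',L}f)(w)=\frac{1}{\sqrt{|L|\,|L\cap L'|}}\sum_{\zeta'\in L'}\overline{\chi(w,\zeta')}\,f(w+\zeta')\qquad(f\in\mathcal E_L,\ w\in W).$$ Then $\gamma_{L',L}$ maps $\mathcal E_L$ into $\mathcal E_{L'}$, and for all $L,L',L''\in\mathcal L$: (a) $\langle\gamma_{L',L}f,h\rangle=\langle f,\gamma_{L,L'}h\rangle$ for $f\in\mathcal E_L$, $h\in\mathcal E_{L'}$; (b) $\langle\gamma_{L',L}f,\gamma_{L',L}h\rangle=\langle f,h\rangle$ for $f,h\in\mathcal E_L$; (c) $\gamma_{L,L'}\circ\gamma_{L',L}=\gamma_{L,L}=\mathrm{id}_{\mathcal E_L}$; (d) $\gamma_{L'',L'}\circ\gamma_{L',L}=\mu(L'',L',L)\,\gamma_{L'',L}$, where $$\mu(L'',L',L)=\sqrt{\frac{|L''\cap L'|}{|L\cap L''|\,|L'\cap L|\,|L|}}\;S_W(L;L',L''),\qquad S_W(L;L',L'')=\sum_{\zeta\in L\cap(L'+L'')}\chi(\zeta',\zeta''),$$ in which each $\zeta\in L\cap(L'+L'')$ is written as $\zeta=\zeta'+\zeta''$ with $\zeta'\in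 L'$, $\zeta''\in L''$ (the summand does not depend on this choice); (e) $\tau_g\circ\gamma_{L',L}=\gamma_{gL',gL}\circ\tau_g$ for every $g\in G$. Consequently $\Gamma=\{\gamma_{L',L}\}$ is a $G$-equivariant connection on the Lagrangian bundle with multiplier $\mu$.
   Context: A self-dual $A$-module is a left $A$-module $S$, finite-dimensional over $k$, together with a non-degenerate, $k$-bilinear, symmetric, $A$-balanced pairing $\eta:S\times S\to k$ ($A$-balanced: $\eta(a^*s,t)=\eta(s,at)$ for $a\in A$, $s,t\in S$). $S$ is a right $A$-module via $s.a=a^*s$, and $W=S\oplus S$ is a right $A$-module componentwise. $B((s,t),(s',t'))=\eta(s,t')-\eta(t,s')$ is a non-degenerate symplectic $k$-form on $W$. Fix a non-trivial character $\psi$ of $(k,+)$ and put $\chi(u,v)=\psi(B(u,v))$ for $u,v\in W$. A Lagrangian is a right $A$-submodule $L\subseteq W$ with $L=L^\perp$ (orthogonal with respect to $B$); $\mathcal L$ is the set of Lagrangians. For $L\in\mathcal L$, $\mathcal E_L=\{f:W\to\mathbb C\mid f(w+\zeta)=\chi(w,\zeta)f(w)\ \forall w\in W,\zeta\in L\}$ with inner product $\langle f,h\rangle=\sum_{w\in W}f(w)\overline{h(w)}$. $G=SL_*(2,A)$ (matrices $\begin{pmatrix}a&b\\c&d\end{pmatrix}$ over $A$ with $ab^*=ba^*$, $cd^*=dc^*$, $a^*c=c^*a$, $b^*d=d^*b$, $ad^*-bc^*=a^*d-c^*b=1$) acts on $W$, written $w\mapsto gw$, either by $gw=g.w$ (matrix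 times column vector, $g.(s,t)=(as+bt,cs+dt)$) or by $gw=w.g^{-1}$ (row vector times matrix); this action preserves $B$, and it is assumed (as in the paper) to map Lagrangians to Lagrangians, $gL=\{gw:w\in L\}$. The action on functions is $(\tau_gf)(w)=f(g^{-1}w)$, so $\tau_g:\mathcal E_L\to\mathcal E_{gL}$. *)

theory Defs
  imports Complex_Main "HOL-Library.Product_Plus"
begin

definition k_algebra_with_involution :: "('k::field \<Rightarrow> 'a::ring_1) \<Rightarrow> ('a \<Rightarrow> 'a) \<Rightarrow> bool" where
  "k_algebra_with_involution alg star \<longleftrightarrow>
     alg 1 = 1 \<and> (\<forall>x y. alg (x + y) = alg x + alg y) \<and> (\<forall>x y. alg (x * y) = alg x * alg y) \<and>
     (\<forall>x a. alg x * a = a * alg x) \<and>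
     (\<forall>a b. star (a + b) = star a + star b) \<and> (\<forall>a b. star (a * b) = star b * star a) \<and>
     (\<forall>a. star (star a) = a) \<and> (\<forall>x. star (alg x) = alg x)"

definition self_dual_module ::
  "('k::field \<Rightarrow> 'a::ring_1) \<Rightarrow> ('a \<Rightarrow> 'a) \<Rightarrow> ('a \<Rightarrow> 's::ab_group_add \<Rightarrow> 's) \<Rightarrow> ('s \<Rightarrow> 's \<Rightarrow> 'k) \<Rightarrow> bool" where
  "self_dual_module alg star smul \<eta> \<longleftrightarrow>
     (\<forall>a s t. smul a (s + t) = smul a s + smul a t) \<and> (\<forall>a b s. smul (a + b) s = smul a s + smul b s) \<and>
     (\<forall>a b s. smul (a * b) s = smul a (smul b s)) \<and> (\<forall>s. smul 1 s = s) \<and>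
     (\<forall>s s' t. \<eta> (s + s') t = \<eta> s t + \<eta> s' t) \<and> (\<forall>s t t'. \<eta> s (t + t') = \<eta> s t + \<eta> s t') \<and>
     (\<forall>c s t. \<eta> (smul (alg c) s) t = c * \<eta> s t) \<and> (\<forall>c s t. \<eta> s (smul (alg c) t) = c * \<eta> s t) \<and>
     (\<forall>s t. \<eta> s t = \<eta> t s) \<and>
     (\<forall>s. (\<forall>t. \<eta> s t = 0) \<longrightarrow> s = 0) \<and>
     (\<forall>a s t. \<eta> (smul (star a) s) t = \<eta> s (smul a t))"

definition nontrivial_character :: "('k::field \<Rightarrow> complex) \<Rightarrow> bool" where
  "nontrivial_character \<psi> \<longleftrightarrow> (\<forall>x y. \<psi> (x + y) = \<psi> x * \<psi> y) \<and> (\<forall>x. cmod (\<psi> x) = 1) \<and> (\<exists>x. \<psi> x \<noteq> 1)"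

definition symB :: "('s \<Rightarrow> 's \<Rightarrow> 'k::field) \<Rightarrow> 's \<times> 's \<Rightarrow> 's \<times> 's \<Rightarrow> 'k" where
  "symB \<eta> w w' = \<eta> (fst w) (snd w') - \<eta> (snd w) (fst w')"

definition chi :: "('k::field \<Rightarrow> complex) \<Rightarrow> ('s \<Rightarrow> 's \<Rightarrow> 'k) \<Rightarrow> 's \<times> 's \<Rightarrow> 's \<times> 's \<Rightarrow> complex" where
  "chi \<psi> \<eta> u v = \<psi> (symB \<eta> u v)"

definition rmul :: "('a \<Rightarrow> 'a) \<Rightarrow> ('a \<Rightarrow> 's \<Rightarrow> 's) \<Rightarrow> 's \<times> 's \<Rightarrow> 'a \<Rightarrow> 's \<times> 's" where
  "rmul star smul w a = (smul (star a) (fst w), smul (star a) (snd w))"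

definition perp :: "('s \<Rightarrow> 's \<Rightarrow> 'k::field) \<Rightarrow> ('s \<times> 's) set \<Rightarrow> ('s \<times> 's) set" where
  "perp \<eta> L = {w. \<forall>z\<in>L. symB \<eta> w z = 0}"

definition lagrangians ::
  "('a \<Rightarrow> 'a) \<Rightarrow> ('a \<Rightarrow> 's::ab_group_add \<Rightarrow> 's) \<Rightarrow> ('s \<Rightarrow> 's \<Rightarrow> 'k::field) \<Rightarrow> ('s \<times> 's) set set" where
  "lagrangians star smul \<eta> = {L. 0 \<in> L \<and> (\<forall>x\<in>L. \<forall>y\<in>L. x + y \<in> L) \<and> (\<forall>x\<in>L. - x \<in> L) \<and>
       (\<forall>x\<in>L. \<forall>a. rmul star smul x a \<in> L) \<and> perp \<eta> L = L}"

definition EL :: "('k::field \<Rightarrow> complex) \<Rightarrow> ('s::ab_group_add \<Rightarrow> 's \<Rightarrow> 'k) \<Rightarrow> ('s \<times> 's) set \<Rightarrow> ('s \<times> 's \<Rightarrow> complex) set" where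
  "EL \<psi> \<eta> L = {f. \<forall>w \<zeta>. \<zeta> \<in> L \<longrightarrow> f (w + \<zeta>) = chi \<psi> \<eta> w \<zeta> * f w}"

definition inner_W :: "('s \<times> 's \<Rightarrow> complex) \<Rightarrow> ('s \<times> 's \<Rightarrow> complex) \<Rightarrow> complex" where
  "inner_W f h = (\<Sum>w\<in>UNIV. f w * cnj (h w))"

definition gamma :: "('k::field \<Rightarrow> complex) \<Rightarrow> ('s::ab_group_add \<Rightarrow> 's \<Rightarrow> 'k) \<Rightarrow> ('s \<times> 's) set \<Rightarrow> ('s \<times> 's) set
     \<Rightarrow> ('s \<times> 's \<Rightarrow> complex) \<Rightarrow> 's \<times> 's \<Rightarrow> complex" where
  "gamma \<psi> \<eta> L' L f w = complex_of_real (1 / sqrt (real (card L * card (L \<inter> L')))) *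
      (\<Sum>\<zeta>'\<in>L'. cnj (chi \<psi> \<eta> w \<zeta>') * f (w + \<zeta>'))"

definition SW :: "('k::field \<Rightarrow> complex) \<Rightarrow> ('s::ab_group_add \<Rightarrow> 's \<Rightarrow> 'k) \<Rightarrow> ('s \<times> 's) set \<Rightarrow> ('s \<times> 's) set \<Rightarrow> ('s \<times> 's) set \<Rightarrow> complex" where
  "SW \<psi> \<eta> L L' L'' = (\<Sum>\<zeta>\<in>L \<inter> {a + b | a b. a \<in> L' \<and> b \<in> L''}.
      (let p = (SOME p. fst p \<in> L' \<and> snd p \<in> L'' \<and> fst p + snd p = \<zeta>) in chi \<psi> \<eta> (fst p) (snd p)))"

definition mu :: "('k::field \<Rightarrow> complex) \<Rightarrow> ('s::ab_group_add \<Rightarrow> 's \<Rightarrow> 'k) \<Rightarrow> ('s \<times> 's) set \<Rightarrow> ('s \<times> 's) set \<Rightarrow> ('s \<times> 's) set \<Rightarrow> complex" where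
  "mu \<psi> \<eta> L'' L' L = complex_of_real (sqrt (real (card (L'' \<inter> L')) / real (card (L \<inter> L'') * card (L' \<inter> L) * card L)))
      * SW \<psi> \<eta> L L' L''"

(* 2x2 matrices over A, as quadruples (a,b,c,d) = [[a,b],[c,d]] *)
type_synonym 'a mat2 = "'a \<times> 'a \<times> 'a \<times> 'a"

definition SLstar :: "('a::ring_1 \<Rightarrow> 'a) \<Rightarrow> 'a mat2 set" where
  "SLstar star = {(a, b, c, d). a * star b = b * star a \<and> c * star d = d * star c \<and>
      star a * c = star c * a \<and> star b * d = star d * b \<and>
      a * star d - b * star c = 1 \<and> star a * d - star c * b = 1}"

definition mat_mult :: "'a::ring_1 mat2 \<Rightarrow> 'a mat2 \<Rightarrow> 'a mat2" where
  "mat_mult g h = (case g of (a, b, c, d) \<Rightarrow> case h of (a', b', c', d') \<Rightarrow>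
      (a * a' + b * c', a * b' + b * d', c * a' + d * c', c * b' + d * d'))"

definition mat_one :: "'a::ring_1 mat2" where
  "mat_one = (1, 0, 0, 1)"

definition mat_inv :: "'a::ring_1 mat2 \<Rightarrow> 'a mat2" where
  "mat_inv g = (THE h. mat_mult g h = mat_one \<and> mat_mult h g = mat_one)"

definition col_act :: "('a::ring_1 \<Rightarrow> 's::ab_group_add \<Rightarrow> 's) \<Rightarrow> 'a mat2 \<Rightarrow> 's \<times> 's \<Rightarrow> 's \<times> 's" where
  "col_act smul g w = (case g of (a, b, c, d) \<Rightarrow>
      (smul a (fst w) + smul b (snd w), smul c (fst w) + smul d (snd w)))"

(* row vector times matrix, S being a right A-module via s.x = x^* s *)
definition row_mult :: "('a::ring_1 \<Rightarrow> 'a) \<Rightarrow> ('a \<Rightarrow> 's::ab_group_add \<Rightarrow> 's) \<Rightarrow> 's \<times> 's \<Rightarrow> 'a mat2 \<Rightarrow> 's \<times> 's" where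
  "row_mult star smul w g = (case g of (a, b, c, d) \<Rightarrow>
      (smul (star a) (fst w) + smul (star c) (snd w), smul (star b) (fst w) + smul (star d) (snd w)))"

definition row_act :: "('a::ring_1 \<Rightarrow> 'a) \<Rightarrow> ('a \<Rightarrow> 's::ab_group_add \<Rightarrow> 's) \<Rightarrow> 'a mat2 \<Rightarrow> 's \<times> 's \<Rightarrow> 's \<times> 's" where
  "row_act star smul g w = row_mult star smul w (mat_inv g)"

definition tau :: "('a::ring_1 mat2 \<Rightarrow> 's \<times> 's \<Rightarrow> 's \<times> 's) \<Rightarrow> 'a mat2 \<Rightarrow> ('s \<times> 's \<Rightarrow> complex) \<Rightarrow> 's \<times> 's \<Rightarrow> complex" where
  "tau act g f w = f (act (mat_inv g) w)"

end

theory Submission imports Defs begin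

(* Write rho_u F (w) = conj chi (w, u) F (w + u) for the Heisenberg translation
   by u in W.  Then E_L is the space of functions fixed by every rho_l, l in L,
   and gamma_{L',L} f is 1 / sqrt (|L| |L n L'|) times the average
   avg_{L'} f = sum_{u in L'} rho_u f.
     This gives membership and claim (a).
   - Claim (d): in avg_{L''} avg_{L'} f = sum_{a in L'} avg_{L''} (rho_a f) the
     terms with a outside L'' + L vanish (2 is invertible in k), and the others
     regroup along the fibres of addition into S_W(L; L', L'').  Claim (c) is
     the case L'' = L, where mu = 1, and (b) follows from (a) and (c).
   - Claim (e): gamma is transported by every B-preserving additive bijection,
     and both actions of SL_*(2, A) are of this kind. *)

definition sumset :: "'g::ab_group_add set \<Rightarrow> 'g set \<Rightarrow> 'g set" where
  "sumset M N = {a + b | a b. a \<in> M \<and> b \<in> N}"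

definition add_subgroup :: "'g::ab_group_add set \<Rightarrow> bool" where
  "add_subgroup M \<longleftrightarrow> 0 \<in> M \<and> (\<forall>x\<in>M. \<forall>y\<in>M. x + y \<in> M) \<and> (\<forall>x\<in>M. - x \<in> M)"

lemma add_subgroup_diff: "add_subgroup M \<Longrightarrow> x \<in> M \<Longrightarrow> y \<in> M \<Longrightarrow> x - y \<in> M"
  unfolding add_subgroup_def by (metis diff_conv_add_uminus)

lemma sum_translate_subgroup:
  assumes M: "add_subgroup M" and z: "z \<in> M"
  shows "(\<Sum>m\<in>M. F (m + z)) = (\<Sum>m\<in>M. F m)"
proof (rule sum.reindex_bij_witness[of M "\<lambda>m. m - z" "\<lambda>m. m + z"])
  show "m - z \<in> M" if "m \<in> M" for m using add_subgroup_diff[OF M that z] .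
qed (use M z in \<open>auto simp: add_subgroup_def\<close>)

lemma add_subgroup_UNIV: "add_subgroup UNIV"
  by (simp add: add_subgroup_def)

lemma addition_fiber_card:
  assumes M: "add_subgroup M" and N: "add_subgroup N" and m0: "m0 \<in> M" and n0: "n0 \<in> N"
  shows "card {p \<in> M \<times> N. fst p + snd p = m0 + n0} = card (M \<inter> N)"
proof -
  have "{p \<in> M \<times> N. fst p + snd p = m0 + n0} = (\<lambda>x. (m0 + x, n0 - x)) ` (M \<inter> N)"
  proof (intro equalityI subsetI)
    fix p assume "p \<in> (\<lambda>x. (m0 + x, n0 - x)) ` (M \<inter> N)"
    then obtain x where "x \<in> M \<inter> N" "p = (m0 + x, n0 - x)" by blast
    then show "p \<in> {p \<in> M \<times> N. fst p + snd p = m0 + n0}"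
      using M m0 add_subgroup_diff[OF N n0] by (auto simp: add_subgroup_def)
  next
    fix p assume p: "p \<in> {p \<in> M \<times> N. fst p + snd p = m0 + n0}"
    have eq: "fst p - m0 = n0 - snd p" using p by (simp add: algebra_simps)
    have "fst p - m0 \<in> M" using p add_subgroup_diff[OF M _ m0] by auto
    moreover have "fst p - m0 \<in> N" unfolding eq using p add_subgroup_diff[OF N n0] by auto
    ultimately show "p \<in> (\<lambda>x. (m0 + x, n0 - x)) ` (M \<inter> N)"
      using p by (intro image_eqI[of _ _ "fst p - m0"]) (auto simp: prod_eq_iff algebra_simps)
  qed
  moreover have "inj_on (\<lambda>x. (m0 + x, n0 - x)) (M \<inter> N)" by (auto intro: inj_onI)
  ultimately show ?thesis by (simp add: card_image)
qed

lemma card_sumset: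
  assumes M: "add_subgroup M" and N: "add_subgroup N" and fin: "finite M" "finite N"
  shows "card (sumset M N) * card (M \<inter> N) = card M * card N"
proof -
  have img: "sumset M N = (\<lambda>p. fst p + snd p) ` (M \<times> N)"
    unfolding sumset_def by force
  have "card M * card N = (\<Sum>p\<in>M \<times> N. (1::nat))" by (simp add: card_cartesian_product)
  also have "\<dots> = (\<Sum>u\<in>sumset M N. \<Sum>p\<in>{p \<in> M \<times> N. fst p + snd p = u}. 1)"
    unfolding img by (rule sum.image_gen) (simp add: fin)
  also have "\<dots> = (\<Sum>u\<in>sumset M N. card (M \<inter> N))"
  proof (rule sum.cong[OF refl])
    fix u assume "u \<in> sumset M N"
    then obtain a b where "a \<in> M" "b \<in> N" "u = a + b" unfolding sumset_def by auto
    then show "(\<Sum>p\<in>{p \<in> M \<times> N. fst p + snd p = u}. 1) = card (M \<inter> N)"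
      using addition_fiber_card[OF M N] by simp
  qed
  finally show ?thesis by simp
qed

(* The real normalising constants of gamma_{L'',L'} gamma_{L',L} and mu gamma_{L'',L} agree. *)
lemma normalisation_identity:
  fixes n p q r :: real
  assumes "n > 0" "p > 0" "q > 0" "r > 0"
  shows "1 / sqrt (n * q) * (1 / sqrt (n * p)) * q / r = sqrt (q / (r * p * n)) * (1 / sqrt (n * r))"
proof -
  have sq: "q = sqrt q * sqrt q" "n = sqrt n * sqrt n" using assms by simp_all
  have "1 / sqrt (n * q) * (1 / sqrt (n * p)) * q / r = sqrt q / (n * sqrt p * r)"
    using assms by (subst (3) sq(1)) (simp add: real_sqrt_mult field_simps)
  also have "\<dots> = sqrt (q / (r * p * n)) * (1 / sqrt (n * r))"
    using assms by (subst (2) sq(2)) (simp add: real_sqrt_mult real_sqrt_divide field_simps)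
  finally show ?thesis .
qed

locale self_dual_setting =
  fixes alg :: "'k::field \<Rightarrow> 'a::ring_1" and star :: "'a \<Rightarrow> 'a"
    and smul :: "'a \<Rightarrow> 's::ab_group_add \<Rightarrow> 's" and \<eta> :: "'s \<Rightarrow> 's \<Rightarrow> 'k"
    and \<psi> :: "'k \<Rightarrow> complex"
  assumes finite_S: "finite (UNIV :: 's set)" and odd_char: "odd CHAR('k)"
    and involution: "k_algebra_with_involution alg star"
    and self_dual: "self_dual_module alg star smul \<eta>"
    and character: "nontrivial_character \<psi>"
begin

abbreviation "B \<equiv> symB \<eta>"
abbreviation "X \<equiv> chi \<psi> \<eta>"
abbreviation "Lag \<equiv> lagrangians star smul \<eta>"

lemma
  shows smul_add: "smul a (s + t) = smul a s + smul a t"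
    and smul_radd: "smul (a + b) s = smul a s + smul b s"
    and smul_mult: "smul (a * b) s = smul a (smul b s)"
    and smul_one [simp]: "smul 1 s = s"
    and eta_ladd: "\<eta> (s + s') t = \<eta> s t + \<eta> s' t"
    and eta_radd: "\<eta> s (t + t') = \<eta> s t + \<eta> s t'"
    and eta_rscal: "\<eta> s (smul (alg c) t) = c * \<eta> s t"
    and eta_sym: "\<eta> s t = \<eta> t s"
    and eta_nondeg: "(\<And>t. \<eta> s t = 0) \<Longrightarrow> s = 0"
    and eta_balanced: "\<eta> (smul (star a) s) t = \<eta> s (smul a t)"
  using self_dual unfolding self_dual_module_def by auto

lemma
  shows star_add: "star (a + b) = star a + star b"
    and star_mult: "star (a * b) = star b * star a"
    and star_star [simp]: "star (star a) = a"
    and star_alg [simp]: "star (alg x) = alg x"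
    and alg_one: "alg 1 = 1"
  using involution unfolding k_algebra_with_involution_def by auto

lemma
  shows psi_add: "\<psi> (x + y) = \<psi> x * \<psi> y"
    and psi_norm: "cmod (\<psi> x) = 1"
    and psi_nontrivial: "\<exists>x. \<psi> x \<noteq> 1"
  using character unfolding nontrivial_character_def by auto

lemma star_zero [simp]: "star 0 = 0" using star_add[of 0 0] by simp
lemma star_one [simp]: "star 1 = 1" using star_alg[of 1] alg_one by simp
lemma star_neg [simp]: "star (- a) = - star a"
  using star_add[of a "- a"] by (simp add: eq_neg_iff_add_eq_0 add.commute)
lemma star_diff: "star (a - b) = star a - star b" using star_add[of a "- b"] by simp

lemma smul_zero [simp]: "smul a 0 = 0" using smul_add[of a 0 0] by simp
lemma smul_zero_left [simp]: "smul 0 s = 0" using smul_radd[of 0 0 s] by simp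

lemma eta_zero_left [simp]: "\<eta> 0 t = 0"
  using eta_ladd[of 0 0 t] by (simp add: add_left_imp_eq[of "\<eta> 0 t" _ 0])
lemma eta_zero_right [simp]: "\<eta> s 0 = 0"
  using eta_radd[of s 0 0] by (simp add: add_left_imp_eq[of "\<eta> s 0" _ 0])
lemma eta_neg_right: "\<eta> s (- t) = - \<eta> s t"
  using eta_radd[of s t "- t"] by (simp add: eq_neg_iff_add_eq_0 add.commute)
lemma eta_smul_left: "\<eta> (smul a s) t = \<eta> s (smul (star a) t)"
  using eta_balanced[of "star a" s t] by simp

lemma psi_zero: "\<psi> 0 = 1"
proof -
  have "\<psi> 0 = \<psi> 0 * \<psi> 0" using psi_add[of 0 0] by simp
  moreover have "\<psi> 0 \<noteq> 0" using psi_norm[of 0] by auto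
  ultimately show ?thesis by (metis mult_cancel_left1)
qed

lemma psi_neg: "\<psi> (- x) = cnj (\<psi> x)"
proof -
  have "\<psi> x * \<psi> (- x) = 1" using psi_add[of x "- x"] psi_zero by simp
  moreover have "\<psi> x * cnj (\<psi> x) = 1" using psi_norm[of x]
    by (metis complex_norm_square mult.commute of_real_1 power_one)
  moreover have "\<psi> x \<noteq> 0" using psi_norm[of x] by auto
  ultimately show ?thesis by (metis mult_left_cancel)
qed

lemma two_nonzero: "(2::'k) \<noteq> 0"
proof
  assume "(2::'k) = 0"
  hence "(of_nat 2 :: 'k) = 0" by simp
  hence two: "CHAR('k) dvd 2" by (simp only: of_nat_eq_0_iff_char_dvd)
  have "CHAR('k) \<noteq> 0" using two by (intro notI) simp
  with dvd_imp_le[OF two] have "CHAR('k) = 1" using odd_char by presburger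
  hence "(of_nat 1 :: 'k) = 0" by (simp only: of_nat_eq_0_iff_char_dvd) simp
  thus False by simp
qed

lemma finite_W: "finite (M :: ('s \<times> 's) set)"
proof -
  have "finite (UNIV :: ('s \<times> 's) set)" using finite_S by (simp add: finite_Prod_UNIV)
  thus ?thesis by (rule finite_subset[rotated]) simp
qed

lemma B_add_left: "B (u + u') v = B u v + B u' v" by (simp add: symB_def eta_ladd)
lemma B_add_right: "B u (v + v') = B u v + B u v'" by (simp add: symB_def eta_radd)
lemma B_antisym: "B u v = - B v u" by (simp add: symB_def eta_sym)
lemma B_neg_right: "B u (- v) = - B u v" by (simp add: symB_def eta_neg_right)
lemma B_zero_left [simp]: "B 0 v = 0" by (simp add: symB_def)

lemma B_nondeg: assumes "\<And>v. B u v = 0" shows "u = 0"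
proof -
  have "\<eta> (fst u) t = 0" for t using assms[of "(0, t)"] by (simp add: symB_def)
  moreover have "\<eta> (snd u) t = 0" for t using assms[of "(t, 0)"] by (simp add: symB_def)
  ultimately show ?thesis using eta_nondeg by (metis prod_eq_iff fst_zero snd_zero)
qed

definition scal :: "'k \<Rightarrow> 's \<times> 's \<Rightarrow> 's \<times> 's" where
  "scal c z = (smul (alg c) (fst z), smul (alg c) (snd z))"

lemma B_scal_right: "B u (scal c v) = c * B u v"
  by (simp add: symB_def scal_def eta_rscal algebra_simps)

lemma X_add_left: "X (u + u') v = X u v * X u' v" by (simp add: chi_def B_add_left psi_add)
lemma X_add_right: "X u (v + v') = X u v * X u v'" by (simp add: chi_def B_add_right psi_add)
lemma X_swap: "cnj (X u v) = X v u" by (simp add: chi_def psi_neg[symmetric] B_antisym[of v u])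
lemma X_neg_right: "X u (- v) = cnj (X u v)" by (simp add: chi_def B_neg_right psi_neg)
lemma X_B_zero: "B u v = 0 \<Longrightarrow> X u v = 1" by (simp add: chi_def psi_zero)
lemma X_zero_left [simp]: "X 0 v = 1" by (simp add: X_B_zero)
lemma X_self [simp]: "X u u = 1" by (simp add: X_B_zero symB_def eta_sym)

lemma X_cnj_mult: "cnj (X u v) * X u v = 1"
  using psi_norm by (metis chi_def complex_norm_square mult.commute of_real_1 power_one)
lemma X_mult_cnj: "X u v * cnj (X u v) = 1"
  using X_cnj_mult by (simp add: mult.commute)

definition k_subspace :: "('s \<times> 's) set \<Rightarrow> bool" where
  "k_subspace M \<longleftrightarrow> add_subgroup M \<and> (\<forall>x\<in>M. \<forall>c. scal c x \<in> M)"

(* Orthogonality of characters: summing w |-> chi (w, m) over a subspace M gives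
   |M| if w annihilates M and 0 otherwise (rescale a witness to hit a value
   where psi is non-trivial, and translate). *)
lemma character_sum:
  assumes M: "k_subspace M"
  shows "(\<Sum>m\<in>M. X w m) = (if w \<in> perp \<eta> M then of_nat (card M) else 0)"
proof (cases "w \<in> perp \<eta> M")
  case True
  hence "(\<Sum>m\<in>M. X w m) = (\<Sum>m\<in>M. 1)" by (intro sum.cong) (auto simp: perp_def X_B_zero)
  thus ?thesis using True by simp
next
  case False
  then obtain z where z: "z \<in> M" "B w z \<noteq> 0" unfolding perp_def by auto
  obtain x where x: "\<psi> x \<noteq> 1" using psi_nontrivial by auto
  define z' where "z' = scal (x / B w z) z"
  have z'M: "z' \<in> M" using M z unfolding k_subspace_def z'_def by auto
  have Xz': "X w z' \<noteq> 1" using x z(2) by (simp add: z'_def chi_def B_scal_right)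
  have "X w z' * (\<Sum>m\<in>M. X w m) = (\<Sum>m\<in>M. X w (m + z'))"
    by (simp add: X_add_right sum_distrib_left mult.commute)
  also have "\<dots> = (\<Sum>m\<in>M. X w m)"
    using M z'M by (intro sum_translate_subgroup) (auto simp: k_subspace_def)
  finally have "(X w z' - 1) * (\<Sum>m\<in>M. X w m) = 0" by (simp add: algebra_simps)
  thus ?thesis using Xz' False by auto
qed

(* |M^perp| |M| = |W|: double-count sum_{w in W} sum_{m in M} chi (w, m) using
   character_sum in both orders (B being non-degenerate). *)
lemma card_perp:
  assumes M: "k_subspace M"
  shows "card (perp \<eta> M) * card M = card (UNIV :: ('s \<times> 's) set)"
proof -
  have W: "k_subspace UNIV" unfolding k_subspace_def by (simp add: add_subgroup_UNIV)
  have perp_W: "m \<in> perp \<eta> UNIV \<longleftrightarrow> m = 0" for m using B_nondeg[of m] by (auto simp: perp_def)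
  have "of_nat (card (perp \<eta> M) * card M) = (\<Sum>w\<in>perp \<eta> M. of_nat (card M) :: complex)" by simp
  also have "\<dots> = (\<Sum>w\<in>UNIV. \<Sum>m\<in>M. X w m)"
    by (simp add: character_sum[OF M] sum.If_cases finite_W)
  also have "\<dots> = (\<Sum>m\<in>M. cnj (\<Sum>w\<in>UNIV. X m w))"
    by (subst sum.swap) (simp add: X_swap)
  also have "\<dots> = (\<Sum>m\<in>M. if m = 0 then of_nat (card (UNIV :: ('s \<times> 's) set)) else 0)"
  proof (rule sum.cong[OF refl])
    fix m
    show "cnj (\<Sum>w\<in>UNIV. X m w) = (if m = 0 then of_nat (card (UNIV :: ('s \<times> 's) set)) else 0)"
      by (simp add: character_sum[OF W] perp_W)
  qed
  also have "\<dots> = of_nat (card (UNIV :: ('s \<times> 's) set))"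
    using M by (simp add: sum.delta finite_W k_subspace_def add_subgroup_def)
  finally show ?thesis by (simp only: of_nat_eq_iff)
qed

lemma
  assumes "L \<in> Lag"
  shows lagrangian_subspace: "k_subspace L"
    and lagrangian_isotropic: "x \<in> L \<Longrightarrow> y \<in> L \<Longrightarrow> B x y = 0"
    and lagrangian_self_perp: "perp \<eta> L = L"
proof -
  have L: "add_subgroup L" "\<forall>x\<in>L. \<forall>a. rmul star smul x a \<in> L" "perp \<eta> L = L"
    using assms unfolding lagrangians_def add_subgroup_def by auto
  show "k_subspace L" using L(1,2) unfolding k_subspace_def by (metis rmul_def scal_def star_alg)
  show "x \<in> L \<Longrightarrow> y \<in> L \<Longrightarrow> B x y = 0" using L(3) unfolding perp_def by auto
  show "perp \<eta> L = L" by (fact L(3))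
qed

lemma lagrangian_subgroup: "L \<in> Lag \<Longrightarrow> add_subgroup L"
  using lagrangian_subspace k_subspace_def by blast

lemma lagrangian_zero: "L \<in> Lag \<Longrightarrow> 0 \<in> L"
  using lagrangian_subgroup add_subgroup_def by blast

lemma lagrangian_neg: "L \<in> Lag \<Longrightarrow> x \<in> L \<Longrightarrow> - x \<in> L"
  using lagrangian_subgroup add_subgroup_def by blast

lemma lagrangian_X: "L \<in> Lag \<Longrightarrow> x \<in> L \<Longrightarrow> y \<in> L \<Longrightarrow> X x y = 1"
  using lagrangian_isotropic X_B_zero by blast

(* All Lagrangians have |L|^2 = |W|, hence the same cardinality. *)
lemma card_lagrangian_eq:
  assumes "L \<in> Lag" "L' \<in> Lag"
  shows "card L = card L'"
proof -
  have sq: "card M * card M = card (UNIV :: ('s \<times> 's) set)" if "M \<in> Lag" for M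
    using card_perp[OF lagrangian_subspace[OF that]] lagrangian_self_perp[OF that] by simp
  have "card L * card L = card L' * card L'" using sq[OF assms(1)] sq[OF assms(2)] by simp
  thus ?thesis by (simp add: power2_eq_square[symmetric])
qed

lemma card_pos: "0 \<in> (M :: ('s \<times> 's) set) \<Longrightarrow> card M > 0"
  using finite_W[of M] by (auto simp: card_gt_0_iff)

lemma card_lagrangian_Int_pos: "L \<in> Lag \<Longrightarrow> L' \<in> Lag \<Longrightarrow> card (L \<inter> L') > 0"
  using lagrangian_zero card_pos by simp

(* (L n L'')^perp = L + L'': the inclusion from right to left is isotropy, and
   both sides have |L| |L''| / |L n L''| elements. *)
lemma perp_Int_lagrangians:
  assumes L: "L \<in> Lag" and L'': "L'' \<in> Lag"
  shows "perp \<eta> (L \<inter> L'') = sumset L L''"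
proof -
  have sub: "sumset L L'' \<subseteq> perp \<eta> (L \<inter> L'')"
  proof
    fix u assume "u \<in> sumset L L''"
    then obtain a b where "a \<in> L" "b \<in> L''" "u = a + b" unfolding sumset_def by auto
    then show "u \<in> perp \<eta> (L \<inter> L'')"
      using lagrangian_isotropic[OF L] lagrangian_isotropic[OF L''] unfolding perp_def
      by (simp add: B_add_left del: split_paired_All)
  qed
  have "k_subspace (L \<inter> L'')"
    using lagrangian_subspace[OF L] lagrangian_subspace[OF L'']
    unfolding k_subspace_def add_subgroup_def by auto
  hence "card (perp \<eta> (L \<inter> L'')) * card (L \<inter> L'') = card L * card L''"
    using card_perp card_perp[OF lagrangian_subspace[OF L]] lagrangian_self_perp[OF L]
      card_lagrangian_eq[OF L L''] by simp
  also have "\<dots> = card (sumset L L'') * card (L \<inter> L'')"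
    using card_sumset[OF lagrangian_subgroup[OF L] lagrangian_subgroup[OF L''] finite_W finite_W] by simp
  finally have "card (perp \<eta> (L \<inter> L'')) = card (sumset L L'')"
    using card_lagrangian_Int_pos[OF L L''] by simp
  thus ?thesis using card_subset_eq[OF finite_W sub] by simp
qed

(* Well-definedness of S_W: for a + b = a' + b' with a, a' in L' and b, b' in L''
   the difference lies in L' n L'', on which chi is trivial against both. *)
lemma X_decomposition_indep:
  assumes L': "L' \<in> Lag" and L'': "L'' \<in> Lag" and a: "a \<in> L'" "a' \<in> L'" and b: "b \<in> L''" "b' \<in> L''"
    and eq: "a + b = a' + b'"
  shows "X a b = X a' b'"
proof -
  define x where "x = a - a'"
  have xb: "x = b' - b" using eq unfolding x_def by (simp add: algebra_simps)
  have x': "x \<in> L'" unfolding x_def using add_subgroup_diff[OF lagrangian_subgroup[OF L'] a] .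
  have x'': "x \<in> L''" unfolding xb using add_subgroup_diff[OF lagrangian_subgroup[OF L''] b(2,1)] .
  have "a = a' + x" by (simp add: x_def)
  moreover have "b = b' + - x" using xb by simp
  ultimately have "X a b = X (a' + x) (b' + - x)" by simp
  also have "\<dots> = X a' b' * X a' (- x) * (X x b' * X x (- x))"
    by (simp only: X_add_left X_add_right) (simp add: mult_ac)
  also have "\<dots> = X a' b'"
    using lagrangian_X[OF L' a(2) x'] lagrangian_X[OF L'' x'' b(2)] by (simp add: X_neg_right)
  finally show ?thesis .
qed

lemma SW_summand:
  assumes L': "L' \<in> Lag" and L'': "L'' \<in> Lag" and a: "a \<in> L'" and b: "b \<in> L''"
  shows "(let p = (SOME p. fst p \<in> L' \<and> snd p \<in> L'' \<and> fst p + snd p = a + b) in X (fst p) (snd p)) = X a b"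
proof -
  define p where "p = (SOME p. fst p \<in> L' \<and> snd p \<in> L'' \<and> fst p + snd p = a + b)"
  have "\<exists>p. fst p \<in> L' \<and> snd p \<in> L'' \<and> fst p + snd p = a + b"
    using a b by (intro exI[of _ "(a, b)"]) simp
  hence p: "fst p \<in> L' \<and> snd p \<in> L'' \<and> fst p + snd p = a + b"
    unfolding p_def by (rule someI_ex)
  have "X (fst p) (snd p) = X a b"
    using p X_decomposition_indep[OF L' L'' _ a _ b, of "fst p" "snd p"] by blast
  thus ?thesis unfolding p_def[symmetric] Let_def .
qed

definition rho :: "'s \<times> 's \<Rightarrow> ('s \<times> 's \<Rightarrow> complex) \<Rightarrow> 's \<times> 's \<Rightarrow> complex" where
  "rho u F w = cnj (X w u) * F (w + u)"

lemma rho_comp: "rho u (rho v F) w = cnj (X u v) * rho (u + v) F w"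
  by (simp add: rho_def X_add_left X_add_right add.assoc mult_ac)

lemma rho_scale: "rho u (\<lambda>w. c * F w) w = c * rho u F w"
  by (simp add: rho_def mult_ac)

lemma rho_sum: "rho u (\<lambda>w. \<Sum>a\<in>A. G a w) w = (\<Sum>a\<in>A. rho u (G a) w)"
  by (simp add: rho_def sum_distrib_left)

lemma EL_iff_rho_fixed: "f \<in> EL \<psi> \<eta> L \<longleftrightarrow> (\<forall>l\<in>L. rho l f = f)"
proof -
  have "f (w + l) = X w l * f w \<longleftrightarrow> cnj (X w l) * f (w + l) = f w" for w l
  proof
    assume "f (w + l) = X w l * f w"
    thus "cnj (X w l) * f (w + l) = f w" by (simp add: mult.assoc[symmetric] X_cnj_mult)
  next
    assume "cnj (X w l) * f (w + l) = f w"
    hence "X w l * f w = (X w l * cnj (X w l)) * f (w + l)" by (simp add: mult.assoc)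
    thus "f (w + l) = X w l * f w" by (simp add: X_mult_cnj)
  qed
  thus ?thesis unfolding EL_def rho_def fun_eq_iff by blast
qed

lemma EL_rho_fixed: "f \<in> EL \<psi> \<eta> L \<Longrightarrow> l \<in> L \<Longrightarrow> rho l f = f"
  using EL_iff_rho_fixed by blast

definition avg :: "('s \<times> 's) set \<Rightarrow> ('s \<times> 's \<Rightarrow> complex) \<Rightarrow> 's \<times> 's \<Rightarrow> complex" where
  "avg M F w = (\<Sum>u\<in>M. rho u F w)"

abbreviation gamma_const :: "('s \<times> 's) set \<Rightarrow> ('s \<times> 's) set \<Rightarrow> complex" where
  "gamma_const L L' \<equiv> complex_of_real (1 / sqrt (real (card L * card (L \<inter> L'))))"

lemma gamma_avg: "gamma \<psi> \<eta> L' L f = (\<lambda>w. gamma_const L L' * avg L' f w)"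
  by (simp add: fun_eq_iff gamma_def avg_def rho_def)

lemma avg_scale: "avg M (\<lambda>w. c * F w) w = c * avg M F w"
  by (simp add: avg_def rho_scale sum_distrib_left)

lemma avg_absorb:
  assumes M: "M \<in> Lag" and b0: "b0 \<in> M"
  shows "avg M (rho b0 G) w = avg M G w"
proof -
  have "avg M (rho b0 G) w = (\<Sum>b\<in>M. rho (b + b0) G w)"
    unfolding avg_def by (intro sum.cong refl) (simp add: rho_comp lagrangian_X[OF M _ b0])
  also have "\<dots> = avg M G w"
    unfolding avg_def using lagrangian_subgroup[OF M] b0 by (rule sum_translate_subgroup)
  finally show ?thesis .
qed

lemma avg_in_EL:
  assumes M: "M \<in> Lag"
  shows "avg M F \<in> EL \<psi> \<eta> M"
  unfolding EL_iff_rho_fixed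
proof (intro ballI ext)
  fix z w assume z: "z \<in> M"
  have "rho z (avg M F) w = (\<Sum>b\<in>M. rho z (rho b F) w)"
    unfolding avg_def by (rule rho_sum)
  also have "\<dots> = (\<Sum>b\<in>M. rho b (rho z F) w)"
  proof (rule sum.cong[OF refl])
    fix b assume b: "b \<in> M"
    show "rho z (rho b F) w = rho b (rho z F) w"
      by (simp add: rho_comp lagrangian_X[OF M z b] lagrangian_X[OF M b z] add.commute)
  qed
  also have "\<dots> = avg M F w" using avg_absorb[OF M z] unfolding avg_def .
  finally show "rho z (avg M F) w = avg M F w" .
qed

lemma gamma_in_EL:
  assumes L': "L' \<in> Lag"
  shows "gamma \<psi> \<eta> L' L f \<in> EL \<psi> \<eta> L'"
  unfolding EL_iff_rho_fixed
proof (intro ballI ext)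
  fix z w assume "z \<in> L'"
  hence "rho z (avg L' f) = avg L' f" using avg_in_EL[OF L'] EL_rho_fixed by blast
  thus "rho z (gamma \<psi> \<eta> L' L f) w = gamma \<psi> \<eta> L' L f w"
    unfolding gamma_avg rho_scale by simp
qed

(* gamma_{L,L} is the identity on E_L: every term of the average equals f. *)
lemma gamma_self:
  assumes L: "L \<in> Lag" and f: "f \<in> EL \<psi> \<eta> L"
  shows "gamma \<psi> \<eta> L L f = f"
proof
  fix w
  have "avg L f w = of_nat (card L) * f w"
    unfolding avg_def using EL_rho_fixed[OF f] by simp
  moreover have "card L > 0" using card_pos[OF lagrangian_zero[OF L]] .
  ultimately show "gamma \<psi> \<eta> L L f w = f w" unfolding gamma_avg by simp
qed

(* Translations by L' are unitary against E_{L'}, so averaging over L'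
   multiplies inner products with E_{L'} by |L'|. *)
lemma inner_rho:
  assumes h: "h \<in> EL \<psi> \<eta> L'" and a: "a \<in> L'"
  shows "inner_W (rho a f) h = inner_W f h"
proof -
  have "inner_W (rho a f) h = (\<Sum>w\<in>UNIV. f (w + a) * cnj (h (w + a)))"
    unfolding inner_W_def
  proof (rule sum.cong[OF refl])
    fix w
    have "h (w + a) = X w a * h w" using h a unfolding EL_def by blast
    thus "rho a f w * cnj (h w) = f (w + a) * cnj (h (w + a))" by (simp add: rho_def mult_ac)
  qed
  also have "\<dots> = inner_W f h"
    unfolding inner_W_def using add_subgroup_UNIV by (rule sum_translate_subgroup) simp
  finally show ?thesis .
qed

lemma inner_avg:
  assumes h: "h \<in> EL \<psi> \<eta> M"
  shows "inner_W (avg M f) h = of_nat (card M) * inner_W f h"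
proof -
  have "inner_W (avg M f) h = (\<Sum>a\<in>M. inner_W (rho a f) h)"
    unfolding inner_W_def avg_def by (subst sum.swap) (simp add: sum_distrib_right)
  also have "\<dots> = of_nat (card M) * inner_W f h" using inner_rho[OF h] by simp
  finally show ?thesis .
qed

lemma inner_scale: "inner_W (\<lambda>w. c * F w) h = c * inner_W F h"
  by (simp add: inner_W_def sum_distrib_left mult_ac)

lemma inner_cnj: "cnj (inner_W h f) = inner_W f h"
  by (simp add: inner_W_def mult.commute)

lemma gamma_adjoint:
  assumes L: "L \<in> Lag" and L': "L' \<in> Lag" and f: "f \<in> EL \<psi> \<eta> L" and h: "h \<in> EL \<psi> \<eta> L'"
  shows "inner_W (gamma \<psi> \<eta> L' L f) h = inner_W f (gamma \<psi> \<eta> L L' h)"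
proof -
  have same: "gamma_const L L' * of_nat (card L') = gamma_const L' L * of_nat (card L)"
    using card_lagrangian_eq[OF L L'] by (simp add: Int_commute)
  have "inner_W (gamma \<psi> \<eta> L' L f) h = gamma_const L L' * of_nat (card L') * inner_W f h"
    unfolding gamma_avg inner_scale inner_avg[OF h] by simp
  also have "\<dots> = cnj (gamma_const L' L * of_nat (card L) * inner_W h f)"
    unfolding same by (simp add: inner_cnj)
  also have "\<dots> = cnj (inner_W (gamma \<psi> \<eta> L L' h) f)"
    unfolding gamma_avg inner_scale inner_avg[OF f] by simp
  also have "\<dots> = inner_W f (gamma \<psi> \<eta> L L' h)" by (rule inner_cnj)
  finally show ?thesis .
qed

(* Composition (claim (d)).  Fix f in E_L.  Averaging avg L' f over L'' gives
   sum_{a in L'} avg L'' (rho_a f), and the term for a is governed by the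
   position of a relative to L'' + L. *)
lemma avg_avg:
  "avg L'' (avg L' f) w = (\<Sum>a\<in>L'. avg L'' (rho a f) w)"
  unfolding avg_def[of L' f] by (simp add: avg_def rho_sum sum.swap[of _ L''])

lemma avg_rho_coset:
  assumes L'': "L'' \<in> Lag" and f: "f \<in> EL \<psi> \<eta> L" and b0: "b0 \<in> L''" and l: "l \<in> L"
  shows "avg L'' (rho (b0 + l) f) w = X b0 l * avg L'' f w"
proof -
  have "rho (b0 + l) f = (\<lambda>w. X b0 l * rho b0 f w)"
  proof
    fix w
    have "rho b0 f w = cnj (X b0 l) * rho (b0 + l) f w"
      using rho_comp[of b0 l f w] EL_rho_fixed[OF f l] by simp
    hence "X b0 l * rho b0 f w = (X b0 l * cnj (X b0 l)) * rho (b0 + l) f w" by (simp add: mult.assoc)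
    thus "rho (b0 + l) f w = X b0 l * rho b0 f w" by (simp add: X_mult_cnj)
  qed
  thus ?thesis by (simp add: avg_scale avg_absorb[OF L'' b0])
qed

lemma rho_commute_EL:
  assumes f: "f \<in> EL \<psi> \<eta> L" and m: "m \<in> L"
  shows "rho m (rho a f) = (\<lambda>w. X a m * X a m * rho a f w)"
proof
  fix w
  have "rho a f w = cnj (X a m) * rho (a + m) f w"
    using rho_comp[of a m f w] EL_rho_fixed[OF f m] by simp
  hence "rho (a + m) f w = X a m * rho a f w" by (simp add: X_mult_cnj mult.assoc[symmetric])
  moreover have "rho m (rho a f) w = cnj (X m a) * rho (a + m) f w"
    using rho_comp[of m a f w] by (simp add: add.commute)
  ultimately show "rho m (rho a f) w = X a m * X a m * rho a f w" by (simp add: X_swap)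
qed

lemma avg_rho_vanish:
  assumes L'': "L'' \<in> Lag" and f: "f \<in> EL \<psi> \<eta> L" and m: "m \<in> L" "m \<in> L''"
    and phase: "X a m * X a m \<noteq> 1"
  shows "avg L'' (rho a f) w = 0"
proof -
  have "avg L'' (rho a f) w = avg L'' (rho m (rho a f)) w" using avg_absorb[OF L'' m(2)] by simp
  also have "\<dots> = X a m * X a m * avg L'' (rho a f) w"
    unfolding rho_commute_EL[OF f m(1)] by (rule avg_scale)
  finally have "(1 - X a m * X a m) * avg L'' (rho a f) w = 0" by (simp add: algebra_simps)
  thus ?thesis using phase by simp
qed

(* Such an m exists whenever a is not in L'' + L: by perp_Int_lagrangians some
   z in L n L'' has B (a, z) <> 0, and m = (x / (2 B (a, z))) z with psi x <> 1
   works because 2 is invertible in k. *)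
lemma phase_witness:
  assumes L: "L \<in> Lag" and L'': "L'' \<in> Lag" and a: "a \<notin> sumset L'' L"
  shows "\<exists>m. m \<in> L \<and> m \<in> L'' \<and> X a m * X a m \<noteq> 1"
proof -
  have "a \<notin> perp \<eta> (L'' \<inter> L)" using perp_Int_lagrangians[OF L'' L] a by simp
  then obtain z where z: "z \<in> L'' \<inter> L" "B a z \<noteq> 0" unfolding perp_def by auto
  obtain x where x: "\<psi> x \<noteq> 1" using psi_nontrivial by auto
  define m where "m = scal (x / (2 * B a z)) z"
  have "m \<in> L" "m \<in> L''"
    unfolding m_def using lagrangian_subspace[OF L] lagrangian_subspace[OF L''] z(1)
    by (auto simp: k_subspace_def)
  moreover have "B a m = x / 2" unfolding m_def B_scal_right using z(2) two_nonzero by simp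
  hence "B a m + B a m = x" using two_nonzero by (simp add: field_simps)
  hence "X a m * X a m = \<psi> x" by (simp add: chi_def psi_add[symmetric])
  ultimately show ?thesis using x by (intro exI[of _ m]) simp
qed

lemma avg_avg_restrict:
  assumes L: "L \<in> Lag" and L'': "L'' \<in> Lag" and f: "f \<in> EL \<psi> \<eta> L"
  shows "(\<Sum>a\<in>L'. avg L'' (rho a f) w) = (\<Sum>a\<in>L' \<inter> sumset L'' L. avg L'' (rho a f) w)"
proof -
  have "avg L'' (rho a f) w = 0" if "a \<notin> sumset L'' L" for a
    using phase_witness[OF L L'' that] avg_rho_vanish[OF L'' f] by blast
  hence "(\<Sum>a\<in>L'. avg L'' (rho a f) w) = (\<Sum>a\<in>L'. if a \<in> sumset L'' L then avg L'' (rho a f) w else 0)"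
    by (intro sum.cong) auto
  thus ?thesis by (simp add: sum.inter_restrict finite_W)
qed

lemma finite_pairs: "finite {p \<in> (M :: ('s \<times> 's) set) \<times> (N :: ('s \<times> 's) set). P p}"
  by (rule finite_subset[OF _ finite_cartesian_product[OF finite_W finite_W]]) auto

(* Regrouping the surviving terms along the fibres of (b, l) |-> b + l. *)
lemma avg_avg_pairs:
  assumes L: "L \<in> Lag" and L'': "L'' \<in> Lag" and f: "f \<in> EL \<psi> \<eta> L"
  shows "of_nat (card (L'' \<inter> L)) * (\<Sum>a\<in>L' \<inter> sumset L'' L. avg L'' (rho a f) w)
       = (\<Sum>p\<in>{p \<in> L'' \<times> L. fst p + snd p \<in> L'}. X (fst p) (snd p)) * avg L'' f w"
    (is "_ = (\<Sum>p\<in>?P. _) * _")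
proof -
  have img: "(\<lambda>p. fst p + snd p) ` ?P = L' \<inter> sumset L'' L"
    unfolding sumset_def by force
  have "(\<Sum>p\<in>?P. X (fst p) (snd p)) * avg L'' f w = (\<Sum>p\<in>?P. X (fst p) (snd p) * avg L'' f w)"
    by (simp add: sum_distrib_right)
  also have "\<dots> = (\<Sum>p\<in>?P. avg L'' (rho (fst p + snd p) f) w)"
  proof (rule sum.cong[OF refl])
    fix p assume "p \<in> ?P"
    hence "fst p \<in> L''" "snd p \<in> L" by auto
    thus "X (fst p) (snd p) * avg L'' f w = avg L'' (rho (fst p + snd p) f) w"
      by (simp add: avg_rho_coset[OF L'' f])
  qed
  also have "\<dots> = (\<Sum>a\<in>L' \<inter> sumset L'' L. \<Sum>p\<in>{p \<in> ?P. fst p + snd p = a}. avg L'' (rho (fst p + snd p) f) w)"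
    unfolding img[symmetric] by (rule sum.image_gen) (rule finite_pairs)
  also have "\<dots> = (\<Sum>a\<in>L' \<inter> sumset L'' L. of_nat (card (L'' \<inter> L)) * avg L'' (rho a f) w)"
  proof (rule sum.cong[OF refl])
    fix a assume a: "a \<in> L' \<inter> sumset L'' L"
    then obtain b0 l0 where bl: "b0 \<in> L''" "l0 \<in> L" "a = b0 + l0" unfolding sumset_def by auto
    have fib: "{p \<in> ?P. fst p + snd p = a} = {p \<in> L'' \<times> L. fst p + snd p = b0 + l0}"
      using a bl by auto
    have "(\<Sum>p\<in>{p \<in> ?P. fst p + snd p = a}. avg L'' (rho (fst p + snd p) f) w)
        = (\<Sum>p\<in>{p \<in> ?P. fst p + snd p = a}. avg L'' (rho a f) w)"
      by (rule sum.cong[OF refl]) simp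
    also have "\<dots> = of_nat (card (L'' \<inter> L)) * avg L'' (rho a f) w"
      unfolding fib
      using addition_fiber_card[OF lagrangian_subgroup[OF L''] lagrangian_subgroup[OF L] bl(1,2)] by simp
    finally show "(\<Sum>p\<in>{p \<in> ?P. fst p + snd p = a}. avg L'' (rho (fst p + snd p) f) w)
        = of_nat (card (L'' \<inter> L)) * avg L'' (rho a f) w" .
  qed
  finally show ?thesis by (simp add: sum_distrib_left)
qed

(* The pairs (b, l) in L'' x L with b + l in L' correspond, via (b, l) |-> (b + l, -b),
   to pairs in L' x L'' with sum in L, preserving chi; their chi-sum is |L' n L''| S_W. *)
lemma pair_sum_SW:
  assumes L: "L \<in> Lag" and L': "L' \<in> Lag" and L'': "L'' \<in> Lag"
  shows "(\<Sum>p\<in>{p \<in> L'' \<times> L. fst p + snd p \<in> L'}. X (fst p) (snd p))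
       = of_nat (card (L' \<inter> L'')) * SW \<psi> \<eta> L L' L''"
proof -
  define Q where "Q = {q \<in> L' \<times> L''. fst q + snd q \<in> L}"
  have "(\<Sum>p\<in>{p \<in> L'' \<times> L. fst p + snd p \<in> L'}. X (fst p) (snd p)) = (\<Sum>q\<in>Q. X (fst q) (snd q))"
  proof (rule sum.reindex_bij_witness[of _ "\<lambda>q. (- snd q, fst q + snd q)" "\<lambda>p. (fst p + snd p, - fst p)"])
    fix p assume p: "p \<in> {p \<in> L'' \<times> L. fst p + snd p \<in> L'}"
    show "(fst p + snd p, - fst p) \<in> Q" using p lagrangian_neg[OF L''] unfolding Q_def by auto
    have "X (fst p + snd p) (- fst p) = X (fst p) (snd p)"
      by (simp add: X_neg_right X_add_left X_swap)
    thus "X (fst (fst p + snd p, - fst p)) (snd (fst p + snd p, - fst p)) = X (fst p) (snd p)" by simp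
  next
    fix q assume "q \<in> Q"
    thus "(- snd q, fst q + snd q) \<in> {p \<in> L'' \<times> L. fst p + snd p \<in> L'}"
      using lagrangian_neg[OF L''] unfolding Q_def by auto
  qed simp_all
  also have "\<dots> = (\<Sum>z\<in>L \<inter> sumset L' L''. \<Sum>q\<in>{q \<in> Q. fst q + snd q = z}. X (fst q) (snd q))"
  proof -
    have img: "(\<lambda>q. fst q + snd q) ` Q = L \<inter> sumset L' L''" unfolding Q_def sumset_def by force
    show ?thesis unfolding img[symmetric] by (rule sum.image_gen) (unfold Q_def, rule finite_pairs)
  qed
  also have "\<dots> = (\<Sum>z\<in>L \<inter> sumset L' L''. of_nat (card (L' \<inter> L'')) *
      (let p = (SOME p. fst p \<in> L' \<and> snd p \<in> L'' \<and> fst p + snd p = z) in X (fst p) (snd p)))"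
  proof (rule sum.cong[OF refl])
    fix z assume z: "z \<in> L \<inter> sumset L' L''"
    then obtain a0 b0 where ab: "a0 \<in> L'" "b0 \<in> L''" "z = a0 + b0" unfolding sumset_def by auto
    have fib: "{q \<in> Q. fst q + snd q = z} = {q \<in> L' \<times> L''. fst q + snd q = a0 + b0}"
      unfolding Q_def using z ab by auto
    have "(\<Sum>q\<in>{q \<in> Q. fst q + snd q = z}. X (fst q) (snd q))
        = (\<Sum>q\<in>{q \<in> L' \<times> L''. fst q + snd q = a0 + b0}. X a0 b0)"
      unfolding fib
    proof (rule sum.cong[OF refl])
      fix q assume "q \<in> {q \<in> L' \<times> L''. fst q + snd q = a0 + b0}"
      hence "fst q \<in> L'" "snd q \<in> L''" "fst q + snd q = a0 + b0" by auto
      thus "X (fst q) (snd q) = X a0 b0" by (rule X_decomposition_indep[OF L' L'' _ ab(1) _ ab(2)])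
    qed
    also have "\<dots> = of_nat (card (L' \<inter> L'')) * X a0 b0"
      using addition_fiber_card[OF lagrangian_subgroup[OF L'] lagrangian_subgroup[OF L''] ab(1,2)] by simp
    also have "X a0 b0 = (let p = (SOME p. fst p \<in> L' \<and> snd p \<in> L'' \<and> fst p + snd p = z) in X (fst p) (snd p))"
      unfolding ab(3) by (rule SW_summand[OF L' L'' ab(1,2), symmetric])
    finally show "(\<Sum>q\<in>{q \<in> Q. fst q + snd q = z}. X (fst q) (snd q)) = of_nat (card (L' \<inter> L'')) *
      (let p = (SOME p. fst p \<in> L' \<and> snd p \<in> L'' \<and> fst p + snd p = z) in X (fst p) (snd p))" .
  qed
  also have "\<dots> = of_nat (card (L' \<inter> L'')) * SW \<psi> \<eta> L L' L''"
    unfolding SW_def sumset_def by (simp only: sum_distrib_left)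
  finally show ?thesis .
qed

lemma avg_composition:
  assumes L: "L \<in> Lag" and L': "L' \<in> Lag" and L'': "L'' \<in> Lag" and f: "f \<in> EL \<psi> \<eta> L"
  shows "of_nat (card (L'' \<inter> L)) * avg L'' (avg L' f) w
       = of_nat (card (L' \<inter> L'')) * SW \<psi> \<eta> L L' L'' * avg L'' f w"
proof -
  have "of_nat (card (L'' \<inter> L)) * avg L'' (avg L' f) w
      = of_nat (card (L'' \<inter> L)) * (\<Sum>a\<in>L' \<inter> sumset L'' L. avg L'' (rho a f) w)"
    by (simp only: avg_avg avg_avg_restrict[OF L L'' f, where L' = L'])
  also have "\<dots> = (\<Sum>p\<in>{p \<in> L'' \<times> L. fst p + snd p \<in> L'}. X (fst p) (snd p)) * avg L'' f w"
    by (rule avg_avg_pairs[OF L L'' f])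
  also have "\<dots> = of_nat (card (L' \<inter> L'')) * SW \<psi> \<eta> L L' L'' * avg L'' f w"
    by (simp only: pair_sum_SW[OF L L' L''])
  finally show ?thesis .
qed

lemma gamma_composition:
  assumes L: "L \<in> Lag" and L': "L' \<in> Lag" and L'': "L'' \<in> Lag" and f: "f \<in> EL \<psi> \<eta> L"
  shows "gamma \<psi> \<eta> L'' L' (gamma \<psi> \<eta> L' L f) = (\<lambda>w. mu \<psi> \<eta> L'' L' L * gamma \<psi> \<eta> L'' L f w)"
proof
  fix w
  define n p q r where "n = card L" and "p = card (L \<inter> L')" and "q = card (L' \<inter> L'')"
    and "r = card (L \<inter> L'')"
  define S where "S = SW \<psi> \<eta> L L' L''"
  have cards: "card L' = n" "card (L'' \<inter> L) = r" "card (L'' \<inter> L') = q" "card (L' \<inter> L) = p"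
    unfolding n_def p_def q_def r_def using card_lagrangian_eq[OF L L'] by (simp_all add: Int_commute)
  have pos: "n > 0" "p > 0" "q > 0" "r > 0" unfolding n_def p_def q_def r_def
    using card_lagrangian_Int_pos[OF L L'] card_lagrangian_Int_pos[OF L' L'']
      card_lagrangian_Int_pos[OF L L''] card_pos[OF lagrangian_zero[OF L]] by auto
  have comp: "avg L'' (avg L' f) w = of_nat q * S * avg L'' f w / of_nat r"
    using avg_composition[OF L L' L'' f, of w] pos(4) unfolding cards S_def q_def
    by (simp add: field_simps)
  have "gamma \<psi> \<eta> L'' L' (gamma \<psi> \<eta> L' L f) w
      = gamma_const L' L'' * (gamma_const L L' * avg L'' (avg L' f) w)"
    by (simp only: gamma_avg avg_scale)
  also have "\<dots> = complex_of_real (1 / sqrt (real n * real q))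
      * (complex_of_real (1 / sqrt (real n * real p)) * (of_nat q * S * avg L'' f w / of_nat r))"
    unfolding comp cards(1) n_def[symmetric] p_def[symmetric] q_def[symmetric] by (simp only: of_nat_mult)
  also have "\<dots> = complex_of_real (1 / sqrt (real n * real q) * (1 / sqrt (real n * real p))
      * real q / real r) * S * avg L'' f w"
    by (simp add: mult_ac)
  also have "\<dots> = complex_of_real (sqrt (real q / (real r * real p * real n))
      * (1 / sqrt (real n * real r))) * S * avg L'' f w"
    using pos by (subst normalisation_identity) simp_all
  also have "\<dots> = mu \<psi> \<eta> L'' L' L * gamma \<psi> \<eta> L'' L f w"
    unfolding gamma_avg mu_def cards S_def[symmetric] n_def[symmetric] r_def[symmetric]
    by (simp add: mult_ac)
  finally show "gamma \<psi> \<eta> L'' L' (gamma \<psi> \<eta> L' L f) w = mu \<psi> \<eta> L'' L' L * gamma \<psi> \<eta> L'' L f w" .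
qed

(* mu(L, L', L) = 1: every z in L decomposes as 0 + z, so S_W(L; L', L) = |L|. *)
lemma mu_self:
  assumes L: "L \<in> Lag" and L': "L' \<in> Lag"
  shows "mu \<psi> \<eta> L L' L = 1"
proof -
  have "z = 0 + z \<and> 0 \<in> L' \<and> z \<in> L" if "z \<in> L" for z
    using that lagrangian_zero[OF L'] by simp
  hence decomp: "L \<inter> {a + b | a b. a \<in> L' \<and> b \<in> L} = L" by blast
  have "SW \<psi> \<eta> L L' L = (\<Sum>z\<in>L. 1)"
    unfolding SW_def decomp
  proof (rule sum.cong[OF refl])
    fix z assume "z \<in> L"
    thus "(let p = SOME p. fst p \<in> L' \<and> snd p \<in> L \<and> fst p + snd p = z in X (fst p) (snd p)) = 1"
      using SW_summand[OF L' L lagrangian_zero[OF L'], of z] by simp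
  qed
  hence SW: "SW \<psi> \<eta> L L' L = of_nat (card L)" by simp
  have n: "card L > 0" using card_pos[OF lagrangian_zero[OF L]] .
  have p: "card (L \<inter> L') > 0" using card_lagrangian_Int_pos[OF L L'] .
  have "sqrt (real (card (L \<inter> L')) / real (card (L \<inter> L) * card (L' \<inter> L) * card L)) = 1 / real (card L)"
    using n p by (simp add: Int_commute real_sqrt_divide real_sqrt_mult field_simps)
  thus ?thesis unfolding mu_def SW using n by simp
qed

lemma gamma_inverse:
  assumes L: "L \<in> Lag" and L': "L' \<in> Lag" and f: "f \<in> EL \<psi> \<eta> L"
  shows "gamma \<psi> \<eta> L L' (gamma \<psi> \<eta> L' L f) = f"
  using gamma_composition[OF L L' L f] mu_self[OF L L'] gamma_self[OF L f] by simp

lemma gamma_isometry: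
  assumes L: "L \<in> Lag" and L': "L' \<in> Lag" and f: "f \<in> EL \<psi> \<eta> L" and h: "h \<in> EL \<psi> \<eta> L"
  shows "inner_W (gamma \<psi> \<eta> L' L f) (gamma \<psi> \<eta> L' L h) = inner_W f h"
  using gamma_adjoint[OF L L' f gamma_in_EL[OF L']] gamma_inverse[OF L L' h] by simp

lemma gamma_transport:
  assumes GH: "\<And>w. G (H w) = w" "\<And>w. H (G w) = w" and G_add: "\<And>u v. G (u + v) = G u + G v"
    and G_B: "\<And>u v. B (G u) (G v) = B u v"
  shows "(\<lambda>w. gamma \<psi> \<eta> L' L f (H w)) = gamma \<psi> \<eta> (G ` L') (G ` L) (\<lambda>w. f (H w))"
proof
  fix w
  have H_add: "H (x + y) = H x + H y" for x y
    by (metis GH G_add)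
  have inj: "inj G" by (metis GH(2) injI)
  have card_L: "card (G ` L) = card L" and card_Int: "card (G ` L \<inter> G ` L') = card (L \<inter> L')"
    using inj by (simp_all add: image_Int[symmetric] card_image inj_on_subset)
  have "(\<Sum>e\<in>G ` L'. cnj (X w e) * f (H (w + e))) = (\<Sum>a\<in>L'. cnj (X w (G a)) * f (H (w + G a)))"
    by (rule sum.reindex[unfolded comp_def]) (rule inj_on_subset[OF inj], simp)
  also have "\<dots> = (\<Sum>a\<in>L'. cnj (X (H w) a) * f (H w + a))"
  proof (rule sum.cong[OF refl])
    fix a
    have "X w (G a) = X (H w) a" by (metis GH(1) G_B chi_def)
    thus "cnj (X w (G a)) * f (H (w + G a)) = cnj (X (H w) a) * f (H w + a)"
      by (simp add: H_add GH)
  qed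
  finally show "gamma \<psi> \<eta> L' L f (H w) = gamma \<psi> \<eta> (G ` L') (G ` L) (\<lambda>w. f (H w)) w"
    unfolding gamma_def card_L card_Int by simp
qed

lemma mat_mult_assoc: "mat_mult (mat_mult g h) k = mat_mult g (mat_mult h k)"
  by (auto simp: mat_mult_def algebra_simps split: prod.splits)

lemma mat_one_left: "mat_mult mat_one g = g"
  by (auto simp: mat_mult_def mat_one_def split: prod.splits)

lemma mat_one_right: "mat_mult g mat_one = g"
  by (auto simp: mat_mult_def mat_one_def split: prod.splits)

lemma mat_inv_eq:
  assumes "mat_mult g h = mat_one" "mat_mult h g = mat_one"
  shows "mat_inv g = h"
  unfolding mat_inv_def
proof (rule the_equality)
  show "mat_mult g h = mat_one \<and> mat_mult h g = mat_one" using assms by simp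
  fix h' assume h': "mat_mult g h' = mat_one \<and> mat_mult h' g = mat_one"
  have "h' = mat_mult h' (mat_mult g h)" using assms by (simp add: mat_one_right)
  also have "\<dots> = mat_mult (mat_mult h' g) h" by (simp add: mat_mult_assoc)
  also have "\<dots> = h" using h' by (simp add: mat_one_left)
  finally show "h' = h" .
qed

lemma SLstar_invertible:
  assumes g: "(a, b, c, d) \<in> SLstar star"
  shows "mat_mult (a, b, c, d) (star d, - star b, - star c, star a) = mat_one"
    and "mat_mult (star d, - star b, - star c, star a) (a, b, c, d) = mat_one"
proof -
  have c: "a * star b = b * star a" "c * star d = d * star c" "star a * c = star c * a"
    "star b * d = star d * b" "a * star d - b * star c = 1" "star a * d - star c * b = 1"
    using g unfolding SLstar_def by auto
  have "d * star a - c * star b = 1" using arg_cong[OF c(5), of star] by (simp add: star_diff star_mult)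
  thus "mat_mult (a, b, c, d) (star d, - star b, - star c, star a) = mat_one"
    using c by (simp add: mat_mult_def mat_one_def algebra_simps)
  have "star d * a - star b * c = 1" using arg_cong[OF c(6), of star] by (simp add: star_diff star_mult)
  thus "mat_mult (star d, - star b, - star c, star a) (a, b, c, d) = mat_one"
    using c by (simp add: mat_mult_def mat_one_def algebra_simps)
qed

lemma SLstar_inverse:
  assumes "g \<in> SLstar star"
  obtains h where "mat_mult g h = mat_one" "mat_mult h g = mat_one"
  using assms SLstar_invertible by (cases g) blast

lemma col_act_mult: "col_act smul g (col_act smul h w) = col_act smul (mat_mult g h) w"
  by (auto simp: col_act_def mat_mult_def smul_add smul_radd smul_mult add_ac split: prod.splits)

lemma col_act_one: "col_act smul mat_one w = w"
  by (simp add: col_act_def mat_one_def)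

lemma col_act_add: "col_act smul g (u + v) = col_act smul g u + col_act smul g v"
  by (auto simp: col_act_def smul_add add_ac split: prod.splits)

lemma row_mult_mult: "row_mult star smul (row_mult star smul w g) h = row_mult star smul w (mat_mult g h)"
  by (auto simp: row_mult_def mat_mult_def smul_add smul_radd smul_mult star_add star_mult add_ac
      split: prod.splits)

lemma row_mult_one: "row_mult star smul w mat_one = w"
  by (simp add: row_mult_def mat_one_def)

lemma row_mult_add: "row_mult star smul (u + v) g = row_mult star smul u g + row_mult star smul v g"
  by (auto simp: row_mult_def smul_add add_ac split: prod.splits)

lemma col_act_symplectic:
  assumes g: "(a, b, c, d) \<in> SLstar star"
  shows "B (col_act smul (a, b, c, d) u) (col_act smul (a, b, c, d) v) = B u v"
proof -
  have c: "star a * c = star c * a" "star b * d = star d * b" "star a * d - star c * b = 1"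
    using g unfolding SLstar_def by auto
  have "star d * a - star b * c = 1" using arg_cong[OF c(3), of star] by (simp add: star_diff star_mult)
  hence "star d * a = 1 + star b * c" by (simp add: algebra_simps)
  moreover have "star a * d = 1 + star c * b" using c(3) by (simp add: algebra_simps)
  ultimately show ?thesis
    by (simp add: symB_def col_act_def eta_ladd eta_radd eta_smul_left smul_mult[symmetric] c(1,2) smul_radd)
qed

lemma row_mult_symplectic:
  assumes g: "(a, b, c, d) \<in> SLstar star"
  shows "B (row_mult star smul u (a, b, c, d)) (row_mult star smul v (a, b, c, d)) = B u v"
proof -
  have c: "a * star b = b * star a" "c * star d = d * star c" "a * star d - b * star c = 1"
    using g unfolding SLstar_def by auto
  have "d * star a - c * star b = 1" using arg_cong[OF c(3), of star] by (simp add: star_diff star_mult)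
  hence "d * star a = 1 + c * star b" by (simp add: algebra_simps)
  moreover have "a * star d = 1 + b * star c" using c(3) by (simp add: algebra_simps)
  ultimately show ?thesis
    by (simp add: symB_def row_mult_def eta_ladd eta_radd eta_balanced smul_mult[symmetric] c(1,2) smul_radd)
qed

lemma tau_gamma:
  assumes act: "act = col_act smul \<or> act = row_act star smul" and g: "g \<in> SLstar star"
  shows "tau act g (gamma \<psi> \<eta> L' L f) = gamma \<psi> \<eta> (act g ` L') (act g ` L) (tau act g f)"
proof -
  obtain h where h: "mat_mult g h = mat_one" "mat_mult h g = mat_one"
    using SLstar_inverse[OF g] by blast
  have inv_g: "mat_inv g = h" and inv_h: "mat_inv h = g"
    using mat_inv_eq h by blast+
  obtain a b c d where gd: "g = (a, b, c, d)" by (cases g)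
  have gS: "(a, b, c, d) \<in> SLstar star" using g gd by simp
  from act show ?thesis
  proof
    assume act: "act = col_act smul"
    have "(\<lambda>w. gamma \<psi> \<eta> L' L f (col_act smul h w))
        = gamma \<psi> \<eta> (col_act smul g ` L') (col_act smul g ` L) (\<lambda>w. f (col_act smul h w))"
    proof (rule gamma_transport)
      show "B (col_act smul g u) (col_act smul g v) = B u v" for u v
        using col_act_symplectic[OF gS] gd by simp
    qed (simp_all add: col_act_mult h col_act_one col_act_add)
    thus ?thesis unfolding act tau_def inv_g .
  next
    assume act: "act = row_act star smul"
    have "(\<lambda>w. gamma \<psi> \<eta> L' L f (row_mult star smul w g))
        = gamma \<psi> \<eta> ((\<lambda>w. row_mult star smul w h) ` L') ((\<lambda>w. row_mult star smul w h) ` L)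
            (\<lambda>w. f (row_mult star smul w g))"
    proof (rule gamma_transport)
      show "B (row_mult star smul u h) (row_mult star smul v h) = B u v" for u v
        using row_mult_symplectic[OF gS, of "row_mult star smul u h" "row_mult star smul v h"]
        by (simp add: row_mult_mult h row_mult_one gd[symmetric])
    qed (simp_all add: row_mult_mult h row_mult_one row_mult_add)
    thus ?thesis unfolding act tau_def row_act_def inv_g inv_h .
  qed
qed

end

theorem mainTheorem3:
  fixes alg :: "'k::field \<Rightarrow> 'a::ring_1" and star :: "'a \<Rightarrow> 'a"
    and smul :: "'a \<Rightarrow> 's::ab_group_add \<Rightarrow> 's" and \<eta> :: "'s \<Rightarrow> 's \<Rightarrow> 'k"
    and \<psi> :: "'k \<Rightarrow> complex" and act :: "'a mat2 \<Rightarrow> 's \<times> 's \<Rightarrow> 's \<times> 's"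
  assumes "finite (UNIV :: 'k set)" and "odd CHAR('k)"
    and "finite (UNIV :: 'a set)" and "finite (UNIV :: 's set)"
    and "k_algebra_with_involution alg star"
    and "self_dual_module alg star smul \<eta>"
    and "nontrivial_character \<psi>"
    and "act = col_act smul \<or> act = row_act star smul"
    and "\<forall>g\<in>SLstar star. \<forall>L\<in>lagrangians star smul \<eta>. act g ` L \<in> lagrangians star smul \<eta>"
  shows
    "(\<forall>L\<in>lagrangians star smul \<eta>. \<forall>L'\<in>lagrangians star smul \<eta>.
        \<forall>f\<in>EL \<psi> \<eta> L. gamma \<psi> \<eta> L' L f \<in> EL \<psi> \<eta> L')
   \<and> (\<forall>L\<in>lagrangians star smul \<eta>. \<forall>L'\<in>lagrangians star smul \<eta>.
        \<forall>f\<in>EL \<psi> \<eta> L. \<forall>h\<in>EL \<psi> \<eta> L'.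
          inner_W (gamma \<psi> \<eta> L' L f) h = inner_W f (gamma \<psi> \<eta> L L' h))
   \<and> (\<forall>L\<in>lagrangians star smul \<eta>. \<forall>L'\<in>lagrangians star smul \<eta>.
        \<forall>f\<in>EL \<psi> \<eta> L. \<forall>h\<in>EL \<psi> \<eta> L.
          inner_W (gamma \<psi> \<eta> L' L f) (gamma \<psi> \<eta> L' L h) = inner_W f h)
   \<and> (\<forall>L\<in>lagrangians star smul \<eta>. \<forall>L'\<in>lagrangians star smul \<eta>.
        \<forall>f\<in>EL \<psi> \<eta> L. gamma \<psi> \<eta> L L' (gamma \<psi> \<eta> L' L f) = gamma \<psi> \<eta> L L f
                      \<and> gamma \<psi> \<eta> L L f = f)
   \<and> (\<forall>L\<in>lagrangians star smul \<eta>. \<forall>L'\<in>lagrangians star smul \<eta>. \<forall>L''\<in>lagrangians star smul \<eta>.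
        \<forall>\<zeta>\<in>L \<inter> {a + b | a b. a \<in> L' \<and> b \<in> L''}. \<forall>a\<in>L'. \<forall>b\<in>L''. \<forall>a'\<in>L'. \<forall>b'\<in>L''.
          a + b = \<zeta> \<longrightarrow> a' + b' = \<zeta> \<longrightarrow> chi \<psi> \<eta> a b = chi \<psi> \<eta> a' b')
   \<and> (\<forall>L\<in>lagrangians star smul \<eta>. \<forall>L'\<in>lagrangians star smul \<eta>. \<forall>L''\<in>lagrangians star smul \<eta>.
        \<forall>f\<in>EL \<psi> \<eta> L. gamma \<psi> \<eta> L'' L' (gamma \<psi> \<eta> L' L f) = (\<lambda>w. mu \<psi> \<eta> L'' L' L * gamma \<psi> \<eta> L'' L f w))
   \<and> (\<forall>g\<in>SLstar star. \<forall>L\<in>lagrangians star smul \<eta>. \<forall>L'\<in>lagrangians star smul \<eta>.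
        \<forall>f\<in>EL \<psi> \<eta> L. tau act g (gamma \<psi> \<eta> L' L f) = gamma \<psi> \<eta> (act g ` L') (act g ` L) (tau act g f))"
proof -
  interpret self_dual_setting alg star smul \<eta> \<psi>
    by unfold_locales (use assms in auto)
  show ?thesis
    using gamma_in_EL gamma_adjoint gamma_isometry gamma_inverse gamma_self gamma_composition
      tau_gamma[OF assms(8)]
    by (auto intro: X_decomposition_indep)
qed

end
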